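(* Let $W_1$ and $W_2$ be arbitrary quantum walks on $\ell^2(\mathbb{Z})\otimes\mathbb{C}^2$, and let $W_1\oplus W_2$ be their direct sum on $\mathcal H=\mathcal H_e\oplus\mathcal H_o$ with respect to even and odd lattice sites (as described below). Then $$v(W_1\oplus W_2)=2\max\{v(W_1),v(W_2)\}.$$
   Context: $\mathcal H=\ell^2(\mathbb{Z})\otimes\mathbb{C}^2$ with basis $\delta_k^\pm=\delta_k\otimes e_\pm$. State-dependent shifts: $S_\pm=T^{\pm1}\otimes P_\pm+\mathbb{1}\otimes P_\mp$, where $T\delta_k=\delta_{k+1}$ and $P_\pm$ are the projections onto $e_+=(1,0)^\top$, $e_-=(0,1)^\top$. A coin operator acts as $C(\delta_k\otimes v)=\delta_k\otimes C(k)v$ with $C(k)$ unitary $2\times2$ matrices. A quantum walk is a finite product of shift operators $S_\pm$ and coin operators. $Q\delta_k^\pm=k\delta_k^\pm$ is the position operator. For a walk $W$ and normalized $\psi\in\mathrm{dom}(Q)$, $v(W,\psi)=\limsup_{t\to\infty}\frac1t\|QW^t\psi\|$, and $v(W)=\sup\{v(W,\psi):\psi\in\mathrm{dom}(Q),\|\psi\|=1\}$. The direct sum is taken with respect to $\mathcal H_e=\ell^2(2\mathbb{Z})\otimes\mathbb{C}^2$ and $\mathcal H_o=\ell^2(2\mathbb{Z}+1)\otimes\mathbb{C}^2$, each identified with $\ell^2(\mathbb{Z})\otimes\mathbb{C}^2$ via $\delta_{2k}^\pm\mapsto\delta_k^\pm$ and $\delta_{2k+1}^\pm\mapsto\delta_k^\pm$;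 $W_1$ acts on $\mathcal H_e$ and $W_2$ on $\mathcal H_o$. *)

theory Defs
  imports "HOL-Analysis.Analysis" "HOL-Library.Extended_Real"
begin

text \<open>Vectors in l2(Z) (x) C^2 are functions int => bool => complex;
  True stands for e_+, False for e_-. Operators are maps on such functions.\<close>

type_synonym state = "int \<Rightarrow> bool \<Rightarrow> complex"

definition l2norm :: "state \<Rightarrow> real" where
  "l2norm \<psi> = sqrt (infsum (\<lambda>(k, s). (cmod (\<psi> k s))\<^sup>2) UNIV)"

definition in_l2 :: "state \<Rightarrow> bool" where
  "in_l2 \<psi> \<longleftrightarrow> (\<lambda>(k, s). (cmod (\<psi> k s))\<^sup>2) summable_on UNIV"

definition Qop :: "state \<Rightarrow> state" where
  "Qop \<psi> = (\<lambda>k s. of_int k * \<psi> k s)"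

definition domQ :: "state set" where
  "domQ = {\<psi>. in_l2 \<psi> \<and> in_l2 (Qop \<psi>)}"

definition unitary2 :: "(bool \<Rightarrow> bool \<Rightarrow> complex) \<Rightarrow> bool" where
  "unitary2 C \<longleftrightarrow>
     (\<forall>i j. (\<Sum>l\<in>UNIV. cnj (C l i) * C l j) = (if i = j then 1 else 0)) \<and>
     (\<forall>i j. (\<Sum>l\<in>UNIV. C i l * cnj (C j l)) = (if i = j then 1 else 0))"

text \<open>S_+ = T (x) P_+ + 1 (x) P_-,  S_- = T^-1 (x) P_- + 1 (x) P_+, T delta_k = delta_(k+1).\<close>
definition Splus :: "state \<Rightarrow> state" where
  "Splus \<psi> = (\<lambda>k s. if s then \<psi> (k - 1) True else \<psi> k False)"

definition Sminus :: "state \<Rightarrow> state" where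
  "Sminus \<psi> = (\<lambda>k s. if s then \<psi> k True else \<psi> (k + 1) False)"

definition coin_op :: "(int \<Rightarrow> bool \<Rightarrow> bool \<Rightarrow> complex) \<Rightarrow> state \<Rightarrow> state" where
  "coin_op C \<psi> = (\<lambda>k s. \<Sum>s'\<in>UNIV. C k s s' * \<psi> k s')"

datatype gen = ShiftPlus | ShiftMinus | Coin "int \<Rightarrow> bool \<Rightarrow> bool \<Rightarrow> complex"

fun gen_op :: "gen \<Rightarrow> state \<Rightarrow> state" where
  "gen_op ShiftPlus = Splus"
| "gen_op ShiftMinus = Sminus"
| "gen_op (Coin C) = coin_op C"

definition valid_gen :: "gen \<Rightarrow> bool" where
  "valid_gen g \<longleftrightarrow> (\<forall>C. g = Coin C \<longrightarrow> (\<forall>k. unitary2 (C k)))"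

definition walk_op :: "gen list \<Rightarrow> state \<Rightarrow> state" where
  "walk_op gs = foldr (\<lambda>g W. gen_op g \<circ> W) gs id"

definition is_walk :: "gen list \<Rightarrow> bool" where
  "is_walk gs \<longleftrightarrow> (\<forall>g\<in>set gs. valid_gen g)"

definition vel_state :: "(state \<Rightarrow> state) \<Rightarrow> state \<Rightarrow> ereal" where
  "vel_state W \<psi> = limsup (\<lambda>t::nat. ereal (l2norm (Qop ((W ^^ t) \<psi>)) / real t))"

definition vel :: "(state \<Rightarrow> state) \<Rightarrow> ereal" where
  "vel W = (SUP \<psi>\<in>{\<psi>. \<psi> \<in> domQ \<and> l2norm \<psi> = 1}. vel_state W \<psi>)"

text \<open>Direct sum w.r.t. even / odd sites: delta_2k -> delta_k on H_e, delta_(2k+1) -> delta_k on H_o.\<close>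
definition walk_dsum :: "(state \<Rightarrow> state) \<Rightarrow> (state \<Rightarrow> state) \<Rightarrow> state \<Rightarrow> state" where
  "walk_dsum W1 W2 \<psi> = (\<lambda>n s.
      if even n then W1 (\<lambda>k. \<psi> (2 * k)) (n div 2) s
      else W2 (\<lambda>k. \<psi> (2 * k + 1)) (n div 2) s)"

end

theory Submission
  imports Defs
begin

(* Split a state into its restrictions x and y to the even and the odd sites. The direct sum
   evolves x under W1 and y under W2, while the position operator acts as 2Q on the even part and
   as 2Q + 1 on the odd part. Hence the even component contributes exactly twice its own spread,
   and the odd one twice its own spread up to a bounded error that vanishes after division by t;
   this gives the lower bound 2 v(W_i), using states supported on one sublattice. For the upper
   bound, homogeneity of walks gives limsup |Q W^t x| / t <= |x| v(W), and the two components
   combine in quadrature:  2 sqrt (|x|^2 + |y|^2) max v(W_i) = 2 max v(W_i). *)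

section \<open>Square-summable states\<close>

definition amp :: "state \<Rightarrow> int \<times> bool \<Rightarrow> real" where
  "amp \<psi> = (\<lambda>(k, s). cmod (\<psi> k s))"

lemma amp_apply [simp]: "amp \<psi> (k, s) = cmod (\<psi> k s)"
  by (simp add: amp_def)

lemma amp_nonneg: "0 \<le> amp \<psi> p"
  by (simp add: amp_def split: prod.splits)

lemma in_l2_iff_summable_amp: "in_l2 \<psi> \<longleftrightarrow> (\<lambda>p. (amp \<psi> p)\<^sup>2) summable_on UNIV"
  by (simp add: in_l2_def amp_def case_prod_unfold)

lemma l2norm_amp: "l2norm \<psi> = sqrt (infsum (\<lambda>p. (amp \<psi> p)\<^sup>2) UNIV)"
  by (simp add: l2norm_def amp_def case_prod_unfold)

lemma l2norm_nonneg: "0 \<le> l2norm \<psi>"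
  by (simp add: l2norm_amp infsum_nonneg)

lemma L2_set_amp_le_l2norm:
  assumes "in_l2 \<psi>" and "finite F"
  shows "L2_set (amp \<psi>) F \<le> l2norm \<psi>"
  unfolding L2_set_def l2norm_amp
  using assms by (intro real_sqrt_le_mono finite_sum_le_infsum) (auto simp: in_l2_iff_summable_amp)

lemma l2_if_L2_set_bounded:
  assumes bound: "\<And>F. finite F \<Longrightarrow> L2_set (amp \<psi>) F \<le> B"
  shows "in_l2 \<psi>" and "l2norm \<psi> \<le> B"
proof -
  have sums: "(\<Sum>p\<in>F. (amp \<psi> p)\<^sup>2) \<le> B\<^sup>2" if "finite F" for F
    using sqrt_le_D[OF bound[OF that, unfolded L2_set_def]] .
  then have summable: "(\<lambda>p. (amp \<psi> p)\<^sup>2) summable_on UNIV"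
    by (intro nonneg_bdd_above_summable_on) (auto simp: bdd_above_def)
  then show "in_l2 \<psi>"
    by (simp add: in_l2_iff_summable_amp)
  have "infsum (\<lambda>p. (amp \<psi> p)\<^sup>2) UNIV \<le> B\<^sup>2"
    using summable sums by (intro infsum_le_finite_sums) auto
  then show "l2norm \<psi> \<le> B"
    using bound[of "{}"] by (simp add: l2norm_amp real_le_lsqrt)
qed

lemma l2_dominated:
  assumes a: "in_l2 a" and b: "in_l2 b" and "0 \<le> \<alpha>" "0 \<le> \<beta>"
    and dom: "\<And>k s. cmod (f k s) \<le> \<alpha> * cmod (a k s) + \<beta> * cmod (b k s)"
  shows "in_l2 f" and "l2norm f \<le> \<alpha> * l2norm a + \<beta> * l2norm b"
proof -
  have "L2_set (amp f) F \<le> \<alpha> * l2norm a + \<beta> * l2norm b" if "finite F" for F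
  proof -
    have "L2_set (amp f) F \<le> L2_set (\<lambda>p. \<alpha> * amp a p + \<beta> * amp b p) F"
      using dom by (intro L2_set_mono) (auto simp: amp_def amp_nonneg split: prod.splits)
    also have "\<dots> \<le> L2_set (\<lambda>p. \<alpha> * amp a p) F + L2_set (\<lambda>p. \<beta> * amp b p) F"
      by (rule L2_set_triangle_ineq)
    also have "\<dots> = \<alpha> * L2_set (amp a) F + \<beta> * L2_set (amp b) F"
      using assms(3,4) by (simp add: L2_set_right_distrib)
    also have "\<dots> \<le> \<alpha> * l2norm a + \<beta> * l2norm b"
      using assms(3,4) L2_set_amp_le_l2norm[OF a that] L2_set_amp_le_l2norm[OF b that]
      by (intro add_mono mult_left_mono) auto
    finally show ?thesis .
  qed
  then show "in_l2 f" and "l2norm f \<le> \<alpha> * l2norm a + \<beta> * l2norm b"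
    using l2_if_L2_set_bounded by blast+
qed

lemma l2_amp_scaled:
  assumes amp_eq: "\<And>p. amp f p = c * amp g p" and "0 \<le> c"
  shows "in_l2 g \<Longrightarrow> in_l2 f" and "l2norm f = c * l2norm g"
proof -
  have sq: "(\<lambda>p. (amp f p)\<^sup>2) = (\<lambda>p. c\<^sup>2 * (amp g p)\<^sup>2)"
    by (simp add: amp_eq power_mult_distrib)
  show "in_l2 g \<Longrightarrow> in_l2 f"
    by (simp add: in_l2_iff_summable_amp sq summable_on_cmult_right)
  show "l2norm f = c * l2norm g"
    using \<open>0 \<le> c\<close> by (simp add: l2norm_amp sq infsum_cmult_right' real_sqrt_mult)
qed

lemma l2_reindex:
  assumes "inj h" and amp_eq: "amp \<phi> = amp \<psi> \<circ> h" and "in_l2 \<psi>"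
  shows "in_l2 \<phi>" and "l2norm \<phi> \<le> l2norm \<psi>"
proof -
  have "L2_set (amp \<phi>) F \<le> l2norm \<psi>" if "finite F" for F
  proof -
    have "L2_set (amp \<phi>) F = L2_set (amp \<psi>) (h ` F)"
      using \<open>inj h\<close> by (simp add: L2_set_def amp_eq sum.reindex inj_on_subset)
    also have "\<dots> \<le> l2norm \<psi>"
      using assms(3) that by (intro L2_set_amp_le_l2norm) auto
    finally show ?thesis .
  qed
  then show "in_l2 \<phi>" and "l2norm \<phi> \<le> l2norm \<psi>"
    using l2_if_L2_set_bounded by blast+
qed

lemma in_l2_zero: "in_l2 (\<lambda>_ _. 0)" and l2norm_zero: "l2norm (\<lambda>_ _. 0) = 0"
  by (simp_all add: in_l2_def l2norm_def case_prod_unfold)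

lemma l2norm_eq_0_iff:
  assumes "in_l2 \<psi>"
  shows "l2norm \<psi> = 0 \<longleftrightarrow> \<psi> = (\<lambda>_ _. 0)"
proof
  assume "l2norm \<psi> = 0"
  then have "cmod (\<psi> k s) \<le> 0" for k s
    using L2_set_amp_le_l2norm[OF assms, of "{(k, s)}"] by simp
  then show "\<psi> = (\<lambda>_ _. 0)"
    by (auto simp: fun_eq_iff)
qed (simp add: l2norm_zero)

definition scale_state :: "complex \<Rightarrow> state \<Rightarrow> state" where
  "scale_state c \<psi> = (\<lambda>k s. c * \<psi> k s)"

lemma amp_scale_state: "amp (scale_state c \<psi>) p = cmod c * amp \<psi> p"
  by (simp add: amp_def scale_state_def norm_mult split: prod.splits)

lemma in_l2_scale_state: "in_l2 \<psi> \<Longrightarrow> in_l2 (scale_state c \<psi>)"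
  by (rule l2_amp_scaled(1)[OF amp_scale_state]) simp_all

lemma l2norm_scale_state: "l2norm (scale_state c \<psi>) = cmod c * l2norm \<psi>"
  by (rule l2_amp_scaled(2)[OF amp_scale_state]) simp

lemma Qop_scale_state: "Qop (scale_state c \<psi>) = scale_state c (Qop \<psi>)"
  by (simp add: Qop_def scale_state_def fun_eq_iff)

lemma zero_domQ: "(\<lambda>_ _. 0) \<in> domQ"
  by (simp add: domQ_def Qop_def in_l2_zero)

section \<open>Shifts, coins and walks\<close>

lemma unitary2_preserves_norm:
  assumes "unitary2 U"
  shows "(\<Sum>l\<in>UNIV. (cmod (\<Sum>s\<in>UNIV. U l s * v s))\<^sup>2) = (\<Sum>s\<in>UNIV. (cmod (v s))\<^sup>2)"
proof -
  obtain a b c d where abcd: "a = U True True" "b = U True False" "c = U False True" "d = U False False"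
    by blast
  obtain x y where xy: "x = v True" "y = v False"
    by blast
  from assms have u: "\<And>i j. (\<Sum>l\<in>UNIV. cnj (U l i) * U l j) = (if i = j then 1 else 0)"
    unfolding unitary2_def by blast
  have col1: "cnj a * a + cnj c * c = 1" and col2: "cnj b * b + cnj d * d = 1"
    and col12: "cnj a * b + cnj c * d = 0"
    using u[of True True] u[of False False] u[of True False] by (simp_all add: UNIV_bool abcd add.commute)
  have col21: "a * cnj b + c * cnj d = 0"
    using arg_cong[OF col12, of cnj] by (simp add: mult.commute)
  have "complex_of_real ((cmod (a * x + b * y))\<^sup>2 + (cmod (c * x + d * y))\<^sup>2)
      = (a * x + b * y) * cnj (a * x + b * y) + (c * x + d * y) * cnj (c * x + d * y)"
    by (simp only: of_real_add complex_norm_square)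
  also have "\<dots> = x * cnj x * (cnj a * a + cnj c * c) + y * cnj y * (cnj b * b + cnj d * d)
      + cnj x * y * (cnj a * b + cnj c * d) + x * cnj y * (a * cnj b + c * cnj d)"
    by (simp add: algebra_simps)
  also have "\<dots> = complex_of_real ((cmod x)\<^sup>2 + (cmod y)\<^sup>2)"
    by (simp only: col1 col2 col12 col21 of_real_add complex_norm_square) simp
  finally have "(cmod (a * x + b * y))\<^sup>2 + (cmod (c * x + d * y))\<^sup>2 = (cmod x)\<^sup>2 + (cmod y)\<^sup>2"
    by (simp only: of_real_eq_iff)
  then show ?thesis
    by (simp add: UNIV_bool abcd xy add_ac)
qed

lemma coin_op_l2:
  assumes U: "\<And>k. unitary2 (C k)" and "in_l2 \<psi>"
  shows "in_l2 (coin_op C \<psi>)" and "l2norm (coin_op C \<psi>) \<le> l2norm \<psi>"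
proof -
  have "L2_set (amp (coin_op C \<psi>)) F \<le> l2norm \<psi>" if "finite F" for F
  proof -
    let ?G = "fst ` F \<times> (UNIV :: bool set)"
    have "finite ?G"
      using that by simp
    have by_site: "L2_set (amp \<phi>) ?G = sqrt (\<Sum>k\<in>fst ` F. \<Sum>s\<in>UNIV. (amp \<phi> (k, s))\<^sup>2)" for \<phi>
      by (simp only: L2_set_def sum.cartesian_product split_def prod.collapse)
    have "L2_set (amp (coin_op C \<psi>)) F \<le> L2_set (amp (coin_op C \<psi>)) ?G"
      unfolding L2_set_def using \<open>finite ?G\<close>
      by (intro real_sqrt_le_mono sum_mono2) (auto intro: rev_image_eqI)
    also have "\<dots> = L2_set (amp \<psi>) ?G"
      unfolding by_site using unitary2_preserves_norm[OF U] by (simp add: coin_op_def)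
    also have "\<dots> \<le> l2norm \<psi>"
      using \<open>finite ?G\<close> assms(2) by (rule L2_set_amp_le_l2norm[rotated])
    finally show ?thesis .
  qed
  then show "in_l2 (coin_op C \<psi>)" and "l2norm (coin_op C \<psi>) \<le> l2norm \<psi>"
    using l2_if_L2_set_bounded by blast+
qed

lemma Qop_coin_op: "Qop (coin_op C \<psi>) = coin_op C (Qop \<psi>)"
  by (simp add: Qop_def coin_op_def fun_eq_iff sum_distrib_left mult.left_commute)

lemma Splus_l2:
  assumes "in_l2 \<psi>"
  shows "in_l2 (Splus \<psi>)" and "l2norm (Splus \<psi>) \<le> l2norm \<psi>"
proof -
  let ?h = "\<lambda>(k :: int, s). (if s then k - 1 else k, s)"
  have "inj ?h" and "amp (Splus \<psi>) = amp \<psi> \<circ> ?h"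
    by (auto simp: inj_def Splus_def fun_eq_iff split: if_splits)
  then show "in_l2 (Splus \<psi>)" and "l2norm (Splus \<psi>) \<le> l2norm \<psi>"
    using l2_reindex assms by blast+
qed

lemma Sminus_l2:
  assumes "in_l2 \<psi>"
  shows "in_l2 (Sminus \<psi>)" and "l2norm (Sminus \<psi>) \<le> l2norm \<psi>"
proof -
  let ?h = "\<lambda>(k :: int, s). (if s then k else k + 1, s)"
  have "inj ?h" and "amp (Sminus \<psi>) = amp \<psi> \<circ> ?h"
    by (auto simp: inj_def Sminus_def fun_eq_iff split: if_splits)
  then show "in_l2 (Sminus \<psi>)" and "l2norm (Sminus \<psi>) \<le> l2norm \<psi>"
    using l2_reindex assms by blast+
qed

lemma gen_op_l2:
  assumes "valid_gen g" and "in_l2 \<psi>"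
  shows "in_l2 (gen_op g \<psi>)" and "l2norm (gen_op g \<psi>) \<le> l2norm \<psi>"
proof -
  have "in_l2 (gen_op g \<psi>) \<and> l2norm (gen_op g \<psi>) \<le> l2norm \<psi>"
  proof (cases g)
    case (Coin C)
    then show ?thesis
      using assms coin_op_l2[of C \<psi>] by (simp add: valid_gen_def)
  qed (simp_all add: assms(2) Splus_l2 Sminus_l2)
  then show "in_l2 (gen_op g \<psi>)" and "l2norm (gen_op g \<psi>) \<le> l2norm \<psi>"
    by simp_all
qed

lemma Qop_gen_op_bound:
  "cmod (Qop (gen_op g \<psi>) k s) \<le> cmod (gen_op g (Qop \<psi>) k s) + cmod (gen_op g \<psi> k s)"
proof (cases g)
  case ShiftPlus
  have "Qop (gen_op g \<psi>) k s = gen_op g (Qop \<psi>) k s + (if s then gen_op g \<psi> k s else 0)"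
    by (simp add: ShiftPlus Qop_def Splus_def algebra_simps)
  then show ?thesis
    using norm_triangle_ineq[of "gen_op g (Qop \<psi>) k s" "gen_op g \<psi> k s"] by (cases s) simp_all
next
  case ShiftMinus
  have "Qop (gen_op g \<psi>) k s = gen_op g (Qop \<psi>) k s - (if s then 0 else gen_op g \<psi> k s)"
    by (simp add: ShiftMinus Qop_def Sminus_def algebra_simps)
  then show ?thesis
    using norm_triangle_ineq4[of "gen_op g (Qop \<psi>) k s" "gen_op g \<psi> k s"] by (cases s) simp_all
qed (simp add: Qop_coin_op)

lemma gen_op_domQ:
  assumes "valid_gen g" and "\<psi> \<in> domQ"
  shows "gen_op g \<psi> \<in> domQ"
proof -
  have "in_l2 (gen_op g (Qop \<psi>))" and "in_l2 (gen_op g \<psi>)"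
    using assms gen_op_l2 by (auto simp: domQ_def)
  then have "in_l2 (Qop (gen_op g \<psi>))"
    by (rule l2_dominated(1)[of _ _ 1 1]) (simp_all add: Qop_gen_op_bound)
  then show ?thesis
    using \<open>in_l2 (gen_op g \<psi>)\<close> by (simp add: domQ_def)
qed

lemma gen_op_scale_state: "gen_op g (scale_state c \<psi>) = scale_state c (gen_op g \<psi>)"
  by (cases g) (auto simp: Splus_def Sminus_def coin_op_def scale_state_def fun_eq_iff
      sum_distrib_left mult.left_commute)

(* Walks are unitary, but the argument only uses homogeneity and contractivity on dom Q. *)
definition homogeneous_contraction :: "(state \<Rightarrow> state) \<Rightarrow> bool" where
  "homogeneous_contraction W \<longleftrightarrow>
     (\<forall>c \<psi>. W (scale_state c \<psi>) = scale_state c (W \<psi>)) \<and>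
     (\<forall>\<psi>\<in>domQ. W \<psi> \<in> domQ \<and> l2norm (W \<psi>) \<le> l2norm \<psi>)"

lemma homogeneous_contraction_id: "homogeneous_contraction id"
  by (simp add: homogeneous_contraction_def)

lemma homogeneous_contraction_comp:
  assumes "homogeneous_contraction W" and "homogeneous_contraction V"
  shows "homogeneous_contraction (W \<circ> V)"
proof -
  have "W (V (scale_state c \<psi>)) = scale_state c (W (V \<psi>))" for c \<psi>
    using assms by (simp add: homogeneous_contraction_def)
  moreover have "W (V \<psi>) \<in> domQ \<and> l2norm (W (V \<psi>)) \<le> l2norm \<psi>" if "\<psi> \<in> domQ" for \<psi>
    using assms that unfolding homogeneous_contraction_def by (meson order.trans)
  ultimately show ?thesis
    by (simp add: homogeneous_contraction_def)
qed

lemma homogeneous_contraction_funpow: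
  "homogeneous_contraction W \<Longrightarrow> homogeneous_contraction (W ^^ n)"
  by (induction n) (simp_all only: funpow.simps homogeneous_contraction_id homogeneous_contraction_comp)

lemma homogeneous_contraction_gen_op:
  assumes "valid_gen g"
  shows "homogeneous_contraction (gen_op g)"
proof -
  have "gen_op g \<psi> \<in> domQ \<and> l2norm (gen_op g \<psi>) \<le> l2norm \<psi>" if "\<psi> \<in> domQ" for \<psi>
    using assms that gen_op_domQ gen_op_l2(2) by (simp add: domQ_def)
  then show ?thesis
    by (simp add: homogeneous_contraction_def gen_op_scale_state)
qed

lemma homogeneous_contraction_walk_op:
  "is_walk gs \<Longrightarrow> homogeneous_contraction (walk_op gs)"
proof (induction gs)
  case Nil
  show ?case
    using homogeneous_contraction_id by (simp add: walk_op_def id_def)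
next
  case (Cons g gs)
  then have "homogeneous_contraction (gen_op g)"
    by (simp add: is_walk_def homogeneous_contraction_gen_op)
  moreover have "homogeneous_contraction (walk_op gs)"
    using Cons by (simp add: is_walk_def)
  moreover have "walk_op (g # gs) = gen_op g \<circ> walk_op gs"
    by (simp add: walk_op_def)
  ultimately show ?case
    by (metis homogeneous_contraction_comp)
qed

section \<open>Even and odd sublattices\<close>

definition even_part :: "state \<Rightarrow> state" where
  "even_part \<psi> = (\<lambda>k. \<psi> (2 * k))"

definition odd_part :: "state \<Rightarrow> state" where
  "odd_part \<psi> = (\<lambda>k. \<psi> (2 * k + 1))"

definition interleave :: "state \<Rightarrow> state \<Rightarrow> state" where
  "interleave x y = (\<lambda>n. if even n then x (n div 2) else y (n div 2))"

lemma even_part_interleave [simp]: "even_part (interleave x y) = x"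
  by (simp add: even_part_def interleave_def)

lemma odd_part_interleave [simp]: "odd_part (interleave x y) = y"
  by (simp add: odd_part_def interleave_def)

lemma interleave_parts [simp]: "interleave (even_part \<psi>) (odd_part \<psi>) = \<psi>"
  by (auto simp: interleave_def even_part_def odd_part_def fun_eq_iff elim: evenE oddE)

lemma walk_dsum_eq_interleave:
  "walk_dsum W1 W2 \<psi> = interleave (W1 (even_part \<psi>)) (W2 (odd_part \<psi>))"
  by (simp add: walk_dsum_def interleave_def even_part_def odd_part_def fun_eq_iff)

lemma funpow_walk_dsum: "walk_dsum W1 W2 ^^ n = walk_dsum (W1 ^^ n) (W2 ^^ n)"
proof (induction n)
  case 0
  show ?case
    by (rule ext) (simp add: walk_dsum_eq_interleave)
next
  case (Suc n)
  show ?case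
    by (rule ext) (simp only: funpow.simps comp_apply Suc.IH, simp add: walk_dsum_eq_interleave)
qed

definition even_site :: "int \<times> bool \<Rightarrow> int \<times> bool" where
  "even_site = (\<lambda>(k, s). (2 * k, s))"

definition odd_site :: "int \<times> bool \<Rightarrow> int \<times> bool" where
  "odd_site = (\<lambda>(k, s). (2 * k + 1, s))"

lemma amp_even_part: "amp (even_part \<psi>) = amp \<psi> \<circ> even_site"
  by (auto simp: even_part_def even_site_def fun_eq_iff)

lemma amp_odd_part: "amp (odd_part \<psi>) = amp \<psi> \<circ> odd_site"
  by (auto simp: odd_part_def odd_site_def fun_eq_iff)

lemma inj_even_site: "inj even_site" and inj_odd_site: "inj odd_site"
  by (auto simp: inj_def even_site_def odd_site_def)

lemma range_even_site_odd_site: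
  "range even_site \<inter> range odd_site = {}" "range even_site \<union> range odd_site = UNIV"
proof -
  show "range even_site \<inter> range odd_site = {}"
    by (auto simp: even_site_def odd_site_def) presburger
  have "(n, s) \<in> range even_site \<union> range odd_site" for n s
  proof (cases "even n")
    case True
    then have "(n, s) = even_site (n div 2, s)"
      by (simp add: even_site_def)
    then show ?thesis by blast
  next
    case False
    then have "(n, s) = odd_site (n div 2, s)"
      by (simp add: odd_site_def)
    then show ?thesis by blast
  qed
  then show "range even_site \<union> range odd_site = UNIV"
    by auto
qed

lemma in_l2_iff_parts: "in_l2 \<psi> \<longleftrightarrow> in_l2 (even_part \<psi>) \<and> in_l2 (odd_part \<psi>)"
proof -
  let ?f = "\<lambda>p. (amp \<psi> p)\<^sup>2"
  have "in_l2 (even_part \<psi>) \<longleftrightarrow> ?f summable_on range even_site"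
    using summable_on_reindex[OF inj_even_site, of ?f]
    by (simp add: in_l2_iff_summable_amp amp_even_part comp_def)
  moreover have "in_l2 (odd_part \<psi>) \<longleftrightarrow> ?f summable_on range odd_site"
    using summable_on_reindex[OF inj_odd_site, of ?f]
    by (simp add: in_l2_iff_summable_amp amp_odd_part comp_def)
  moreover have "?f summable_on UNIV \<longleftrightarrow> ?f summable_on range even_site \<and> ?f summable_on range odd_site"
    using summable_on_Un_disjoint[OF _ _ range_even_site_odd_site(1), of ?f]
      summable_on_subset_banach[of ?f UNIV]
    by (metis range_even_site_odd_site(2) subset_UNIV)
  ultimately show ?thesis
    by (simp add: in_l2_iff_summable_amp)
qed

lemma l2norm_parts:
  assumes "in_l2 \<psi>"
  shows "(l2norm \<psi>)\<^sup>2 = (l2norm (even_part \<psi>))\<^sup>2 + (l2norm (odd_part \<psi>))\<^sup>2"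
proof -
  let ?f = "\<lambda>p. (amp \<psi> p)\<^sup>2"
  have summable: "?f summable_on A" for A
    using assms summable_on_subset_banach by (auto simp: in_l2_iff_summable_amp)
  have "(l2norm \<psi>)\<^sup>2 = infsum ?f (range even_site \<union> range odd_site)"
    by (simp add: l2norm_amp infsum_nonneg range_even_site_odd_site(2))
  also have "\<dots> = infsum ?f (range even_site) + infsum ?f (range odd_site)"
    by (rule infsum_Un_disjoint[OF summable summable range_even_site_odd_site(1)])
  also have "\<dots> = (l2norm (even_part \<psi>))\<^sup>2 + (l2norm (odd_part \<psi>))\<^sup>2"
    by (simp add: l2norm_amp infsum_nonneg amp_even_part amp_odd_part comp_def
        infsum_reindex[OF inj_even_site] infsum_reindex[OF inj_odd_site])
  finally show ?thesis .
qed

lemma l2norm_part_le: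
  assumes "in_l2 \<psi>"
  shows "l2norm (even_part \<psi>) \<le> l2norm \<psi>" and "l2norm (odd_part \<psi>) \<le> l2norm \<psi>"
  using l2norm_parts[OF assms] l2norm_nonneg[of \<psi>]
    power2_le_imp_le[of "l2norm (even_part \<psi>)" "l2norm \<psi>"]
    power2_le_imp_le[of "l2norm (odd_part \<psi>)" "l2norm \<psi>"]
  by simp_all

lemma even_part_Qop: "even_part (Qop \<psi>) = scale_state 2 (Qop (even_part \<psi>))"
  by (simp add: even_part_def Qop_def scale_state_def fun_eq_iff)

lemma odd_part_Qop: "odd_part (Qop \<psi>) k s = 2 * Qop (odd_part \<psi>) k s + odd_part \<psi> k s"
  by (simp add: odd_part_def Qop_def algebra_simps)

lemma l2norm_even_part_Qop: "l2norm (even_part (Qop \<psi>)) = 2 * l2norm (Qop (even_part \<psi>))"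
  by (simp add: even_part_Qop l2norm_scale_state)

lemma odd_part_Qop_bounds:
  assumes "in_l2 (odd_part \<psi>)" and "in_l2 (Qop (odd_part \<psi>))"
  shows "in_l2 (odd_part (Qop \<psi>))"
    and "l2norm (odd_part (Qop \<psi>)) \<le> 2 * l2norm (Qop (odd_part \<psi>)) + l2norm (odd_part \<psi>)"
  using l2_dominated[OF assms(2,1), of 2 1 "odd_part (Qop \<psi>)"]
  by (simp_all add: odd_part_Qop norm_triangle_le norm_mult)

lemma Qop_odd_part_bounds:
  assumes "in_l2 (odd_part \<psi>)" and "in_l2 (odd_part (Qop \<psi>))"
  shows "in_l2 (Qop (odd_part \<psi>))"
    and "2 * l2norm (Qop (odd_part \<psi>)) \<le> l2norm (odd_part (Qop \<psi>)) + l2norm (odd_part \<psi>)"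
proof -
  have "cmod (Qop (odd_part \<psi>) k s)
      \<le> 1/2 * cmod (odd_part (Qop \<psi>) k s) + 1/2 * cmod (odd_part \<psi> k s)" for k s
    using norm_triangle_ineq4[of "odd_part (Qop \<psi>) k s" "odd_part \<psi> k s"]
    by (simp add: odd_part_Qop norm_mult)
  from l2_dominated[OF assms(2,1) _ _ this]
  show "in_l2 (Qop (odd_part \<psi>))"
    and "2 * l2norm (Qop (odd_part \<psi>)) \<le> l2norm (odd_part (Qop \<psi>)) + l2norm (odd_part \<psi>)"
    by simp_all
qed

lemma domQ_iff_parts: "\<psi> \<in> domQ \<longleftrightarrow> even_part \<psi> \<in> domQ \<and> odd_part \<psi> \<in> domQ"
proof -
  have even: "in_l2 (even_part (Qop \<psi>)) \<longleftrightarrow> in_l2 (Qop (even_part \<psi>))"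
    using in_l2_scale_state[of "Qop (even_part \<psi>)" 2]
      in_l2_scale_state[of "even_part (Qop \<psi>)" "1/2"]
    by (auto simp: even_part_Qop scale_state_def)
  have odd: "in_l2 (odd_part (Qop \<psi>)) \<longleftrightarrow> in_l2 (Qop (odd_part \<psi>))" if "in_l2 (odd_part \<psi>)"
    using that odd_part_Qop_bounds(1) Qop_odd_part_bounds(1) by blast
  show ?thesis
    unfolding domQ_def mem_Collect_eq in_l2_iff_parts[of \<psi>] in_l2_iff_parts[of "Qop \<psi>"]
    using even odd by blast
qed

lemma interleave_domQ: "interleave x y \<in> domQ \<longleftrightarrow> x \<in> domQ \<and> y \<in> domQ"
  using domQ_iff_parts[of "interleave x y"] by simp

lemma l2norm_interleave:
  assumes "in_l2 x" and "in_l2 y"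
  shows "l2norm (interleave x y) = sqrt ((l2norm x)\<^sup>2 + (l2norm y)\<^sup>2)"
  using assms l2norm_parts[of "interleave x y"] in_l2_iff_parts[of "interleave x y"]
    l2norm_nonneg[of "interleave x y"]
  by (simp add: real_sqrt_unique)

section \<open>Velocities of single walks\<close>

lemma vel_state_nonneg: "0 \<le> vel_state W \<psi>"
  unfolding vel_state_def by (rule le_Limsup) (auto simp: l2norm_nonneg)

lemma vel_state_le_vel: "\<psi> \<in> domQ \<Longrightarrow> l2norm \<psi> = 1 \<Longrightarrow> vel_state W \<psi> \<le> vel W"
  unfolding vel_def by (rule SUP_upper) simp

definition unit_at_origin :: state where
  "unit_at_origin = (\<lambda>k s. if k = 0 \<and> s then 1 else 0)"

lemma unit_at_origin_domQ: "unit_at_origin \<in> domQ"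
  and l2norm_unit_at_origin: "l2norm unit_at_origin = 1"
proof -
  have amp_sq: "(amp unit_at_origin p)\<^sup>2 = (if p = (0, True) then 1 else 0)" for p
    by (auto simp: unit_at_origin_def amp_def split: prod.splits)
  have "L2_set (amp unit_at_origin) F \<le> 1" if "finite F" for F
    using that by (simp add: L2_set_def amp_sq)
  then have "in_l2 unit_at_origin" and "l2norm unit_at_origin \<le> 1"
    using l2_if_L2_set_bounded by blast+
  moreover have "1 \<le> l2norm unit_at_origin"
    using L2_set_amp_le_l2norm[OF \<open>in_l2 unit_at_origin\<close>, of "{(0, True)}"]
    by (simp add: unit_at_origin_def)
  moreover have "Qop unit_at_origin = (\<lambda>_ _. 0)"
    by (simp add: Qop_def unit_at_origin_def fun_eq_iff)
  ultimately show "unit_at_origin \<in> domQ" "l2norm unit_at_origin = 1"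
    by (simp_all add: domQ_def in_l2_zero)
qed

lemma vel_nonneg: "0 \<le> vel W"
  using vel_state_nonneg vel_state_le_vel[OF unit_at_origin_domQ l2norm_unit_at_origin]
  by (rule order.trans)

lemma two_times_vel_le:
  assumes "\<And>\<psi>. \<psi> \<in> domQ \<Longrightarrow> l2norm \<psi> = 1 \<Longrightarrow> 2 * vel_state W \<psi> \<le> V"
  shows "2 * vel W \<le> V"
proof -
  have "2 * vel W = (SUP \<psi>\<in>{\<psi>. \<psi> \<in> domQ \<and> l2norm \<psi> = 1}. 2 * vel_state W \<psi>)"
    unfolding vel_def using unit_at_origin_domQ l2norm_unit_at_origin
    by (intro SUP_ereal_mult_left[symmetric]) (auto simp: vel_state_nonneg)
  also have "\<dots> \<le> V"
    using assms by (auto intro: SUP_least)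
  finally show ?thesis .
qed

lemma vel_state_scale:
  assumes "homogeneous_contraction W" and "0 \<le> c"
  shows "vel_state W (scale_state (of_real c) x) = ereal c * vel_state W x"
proof -
  have pow: "(W ^^ t) (scale_state (of_real c) x) = scale_state (of_real c) ((W ^^ t) x)" for t
    using homogeneous_contraction_funpow[OF assms(1)] by (simp add: homogeneous_contraction_def)
  have "(\<lambda>t. ereal (l2norm (Qop ((W ^^ t) (scale_state (of_real c) x))) / real t))
      = (\<lambda>t. ereal c * ereal (l2norm (Qop ((W ^^ t) x)) / real t))"
    using assms(2) by (intro ext) (simp add: pow Qop_scale_state l2norm_scale_state)
  then show ?thesis
    unfolding vel_state_def by (simp only:) (rule Limsup_ereal_mult_left; simp add: assms(2))
qed

lemma vel_state_le_l2norm_times_vel: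
  assumes W: "homogeneous_contraction W" and "x \<in> domQ"
  shows "vel_state W x \<le> ereal (l2norm x) * vel W"
proof (cases "l2norm x = 0")
  case True
  then have "x = scale_state (of_real 0) x"
    using assms(2) l2norm_eq_0_iff by (simp add: domQ_def scale_state_def)
  then have "vel_state W x = vel_state W (scale_state (of_real 0) x)"
    by (rule arg_cong)
  also have "\<dots> = 0"
    using vel_state_scale[OF W order.refl] by simp
  also have "\<dots> = ereal (l2norm x) * vel W"
    using True by simp
  finally show ?thesis
    by simp
next
  case False
  define N where "N = l2norm x"
  have "0 < N"
    using False l2norm_nonneg[of x] unfolding N_def by linarith
  define x' where "x' = scale_state (of_real (1 / N)) x"
  have "x' \<in> domQ"
    using assms(2) by (simp add: x'_def domQ_def Qop_scale_state in_l2_scale_state)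
  moreover have "l2norm x' = 1"
    using \<open>0 < N\<close> by (simp add: x'_def l2norm_scale_state N_def norm_divide)
  moreover have "x = scale_state (of_real N) x'"
    using \<open>0 < N\<close> by (simp add: x'_def scale_state_def)
  ultimately have "vel_state W x = ereal N * vel_state W x'" and "vel_state W x' \<le> vel W"
    using vel_state_scale[OF W, of N x'] \<open>0 < N\<close> vel_state_le_vel by simp_all
  then show ?thesis
    using \<open>0 < N\<close> by (simp add: N_def ereal_mult_left_mono)
qed

lemma sqrt_sum_squares_divide:
  fixes p q t :: real
  assumes "0 \<le> t"
  shows "sqrt ((p / t)\<^sup>2 + (q / t)\<^sup>2) = sqrt (p\<^sup>2 + q\<^sup>2) / t"
  using assms by (simp add: power_divide real_sqrt_divide flip: add_divide_distrib)

lemma Limsup_sqrt_sum_squares_le: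
  fixes u v :: "'a \<Rightarrow> real"
  assumes "\<And>t. 0 \<le> u t" and "\<And>t. 0 \<le> v t"
    and "Limsup F (\<lambda>t. ereal (u t)) \<le> ereal U" and "Limsup F (\<lambda>t. ereal (v t)) \<le> ereal V"
  shows "Limsup F (\<lambda>t. ereal (sqrt ((u t)\<^sup>2 + (v t)\<^sup>2))) \<le> ereal (sqrt (U\<^sup>2 + V\<^sup>2))"
proof (rule ereal_le_epsilon2)
  fix e :: real
  assume "0 < e"
  define \<epsilon> where "\<epsilon> = e / 2"
  have "0 < \<epsilon>"
    using \<open>0 < e\<close> by (simp add: \<epsilon>_def)
  have "Limsup F (\<lambda>t. ereal (u t)) < ereal (U + \<epsilon>)"
    and "Limsup F (\<lambda>t. ereal (v t)) < ereal (V + \<epsilon>)"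
    using assms(3,4) \<open>0 < \<epsilon>\<close> by (auto elim!: order.strict_trans1)
  then have "eventually (\<lambda>t. u t < U + \<epsilon>) F" and "eventually (\<lambda>t. v t < V + \<epsilon>) F"
    using Limsup_lessD by fastforce+
  then have "eventually (\<lambda>t. ereal (sqrt ((u t)\<^sup>2 + (v t)\<^sup>2)) \<le> ereal (sqrt (U\<^sup>2 + V\<^sup>2) + e)) F"
  proof eventually_elim
    case (elim t)
    have "sqrt ((u t)\<^sup>2 + (v t)\<^sup>2) \<le> sqrt ((U + \<epsilon>)\<^sup>2 + (V + \<epsilon>)\<^sup>2)"
      using elim assms(1,2)[of t] by (simp add: power_mono add_mono)
    also have "\<dots> \<le> sqrt (U\<^sup>2 + V\<^sup>2) + sqrt (\<epsilon>\<^sup>2 + \<epsilon>\<^sup>2)"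
      by (rule real_sqrt_sum_squares_triangle_ineq)
    also have "sqrt (\<epsilon>\<^sup>2 + \<epsilon>\<^sup>2) \<le> sqrt ((2 * \<epsilon>)\<^sup>2)"
      by (simp add: power_mult_distrib)
    finally show ?case
      using \<open>0 < \<epsilon>\<close> by (simp add: \<epsilon>_def)
  qed
  then show "Limsup F (\<lambda>t. ereal (sqrt ((u t)\<^sup>2 + (v t)\<^sup>2))) \<le> ereal (sqrt (U\<^sup>2 + V\<^sup>2)) + ereal e"
    by (simp add: Limsup_bounded)
qed

section \<open>Velocity of the direct sum\<close>

lemma parts_funpow_walk_dsum:
  "even_part ((walk_dsum A B ^^ t) \<psi>) = (A ^^ t) (even_part \<psi>)"
  "odd_part ((walk_dsum A B ^^ t) \<psi>) = (B ^^ t) (odd_part \<psi>)"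
  by (simp_all add: funpow_walk_dsum walk_dsum_eq_interleave)

lemma funpow_walk_dsum_domQ:
  assumes "homogeneous_contraction A" and "homogeneous_contraction B" and "\<psi> \<in> domQ"
  shows "(walk_dsum A B ^^ t) \<psi> \<in> domQ"
proof -
  have "(A ^^ t) (even_part \<psi>) \<in> domQ" and "(B ^^ t) (odd_part \<psi>) \<in> domQ"
    using assms homogeneous_contraction_funpow domQ_iff_parts[of \<psi>]
    by (auto simp: homogeneous_contraction_def)
  then show ?thesis
    by (simp add: funpow_walk_dsum walk_dsum_eq_interleave interleave_domQ)
qed

lemma l2norm_Qop_even_part_le:
  assumes "\<phi> \<in> domQ"
  shows "2 * l2norm (Qop (even_part \<phi>)) \<le> l2norm (Qop \<phi>)"
  using assms l2norm_part_le(1)[of "Qop \<phi>"] by (simp add: domQ_def l2norm_even_part_Qop)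

lemma l2norm_Qop_odd_part_le:
  assumes "\<phi> \<in> domQ"
  shows "2 * l2norm (Qop (odd_part \<phi>)) \<le> l2norm (Qop \<phi>) + l2norm (odd_part \<phi>)"
proof -
  have "in_l2 (odd_part \<phi>)" and "in_l2 (odd_part (Qop \<phi>))" and "in_l2 (Qop \<phi>)"
    using assms in_l2_iff_parts[of \<phi>] in_l2_iff_parts[of "Qop \<phi>"] by (simp_all add: domQ_def)
  then show ?thesis
    using Qop_odd_part_bounds(2) l2norm_part_le(2) by fastforce
qed

lemma l2norm_Qop_le_parts:
  assumes "\<phi> \<in> domQ"
  shows "l2norm (Qop \<phi>) \<le> 2 * sqrt ((l2norm (Qop (even_part \<phi>)))\<^sup>2 + (l2norm (Qop (odd_part \<phi>)))\<^sup>2)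
    + l2norm (odd_part \<phi>)"
proof -
  define a b c where "a = l2norm (Qop (even_part \<phi>))" and "b = l2norm (Qop (odd_part \<phi>))"
    and "c = l2norm (odd_part \<phi>)"
  have "in_l2 (Qop \<phi>)" and "odd_part \<phi> \<in> domQ"
    using assms domQ_iff_parts[of \<phi>] by (auto simp: domQ_def)
  then have odd: "l2norm (odd_part (Qop \<phi>)) \<le> 2 * b + c"
    using odd_part_Qop_bounds(2) by (simp add: domQ_def b_def c_def)
  have "l2norm (Qop \<phi>) = sqrt ((l2norm (Qop \<phi>))\<^sup>2)"
    by (simp add: l2norm_nonneg)
  also have "\<dots> = sqrt ((2 * a)\<^sup>2 + (l2norm (odd_part (Qop \<phi>)))\<^sup>2)"
    using l2norm_parts[OF \<open>in_l2 (Qop \<phi>)\<close>] by (simp add: a_def l2norm_even_part_Qop)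
  also have "\<dots> \<le> sqrt ((2 * a + 0)\<^sup>2 + (2 * b + c)\<^sup>2)"
    using odd l2norm_nonneg[of "odd_part (Qop \<phi>)"] power_mono[OF odd, of 2] by simp
  also have "\<dots> \<le> sqrt ((2 * a)\<^sup>2 + (2 * b)\<^sup>2) + sqrt (0\<^sup>2 + c\<^sup>2)"
    by (rule real_sqrt_sum_squares_triangle_ineq)
  also have "(2 * a)\<^sup>2 + (2 * b)\<^sup>2 = 2\<^sup>2 * (a\<^sup>2 + b\<^sup>2)"
    by (simp add: power_mult_distrib algebra_simps)
  also have "sqrt (2\<^sup>2 * (a\<^sup>2 + b\<^sup>2)) + sqrt (0\<^sup>2 + c\<^sup>2) = 2 * sqrt (a\<^sup>2 + b\<^sup>2) + c"
    by (simp only: real_sqrt_mult real_sqrt_abs) (simp add: c_def l2norm_nonneg)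
  finally show ?thesis
    by (simp add: a_def b_def c_def)
qed

lemma vel_state_walk_dsum_ge_even:
  assumes A: "homogeneous_contraction A" and B: "homogeneous_contraction B" and "\<psi> \<in> domQ"
  shows "2 * vel_state A (even_part \<psi>) \<le> vel_state (walk_dsum A B) \<psi>"
proof -
  have "ereal 2 * ereal (l2norm (Qop ((A ^^ t) (even_part \<psi>))) / real t)
      \<le> ereal (l2norm (Qop ((walk_dsum A B ^^ t) \<psi>)) / real t)" for t
    using divide_right_mono[OF l2norm_Qop_even_part_le[OF funpow_walk_dsum_domQ[OF A B assms(3)]],
        of "real t"]
    by (simp add: parts_funpow_walk_dsum)
  then have "Limsup sequentially (\<lambda>t. ereal 2 * ereal (l2norm (Qop ((A ^^ t) (even_part \<psi>))) / real t))
      \<le> vel_state (walk_dsum A B) \<psi>"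
    unfolding vel_state_def by (intro Limsup_mono always_eventually) simp
  moreover have "Limsup sequentially (\<lambda>t. ereal 2 * ereal (l2norm (Qop ((A ^^ t) (even_part \<psi>))) / real t))
      = 2 * vel_state A (even_part \<psi>)"
    unfolding vel_state_def by (subst Limsup_ereal_mult_left) simp_all
  ultimately show ?thesis
    by simp
qed

lemma vel_state_walk_dsum_ge_odd:
  assumes A: "homogeneous_contraction A" and B: "homogeneous_contraction B" and "\<psi> \<in> domQ"
  shows "2 * vel_state B (odd_part \<psi>) \<le> vel_state (walk_dsum A B) \<psi>"
proof -
  define c where "c = l2norm (odd_part \<psi>)"
  have "ereal 2 * ereal (l2norm (Qop ((B ^^ t) (odd_part \<psi>))) / real t)
      \<le> ereal (c / real t) + ereal (l2norm (Qop ((walk_dsum A B ^^ t) \<psi>)) / real t)" for t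
  proof -
    let ?\<phi> = "(walk_dsum A B ^^ t) \<psi>"
    have "odd_part \<psi> \<in> domQ"
      using assms(3) domQ_iff_parts[of \<psi>] by blast
    then have "l2norm (odd_part ?\<phi>) \<le> c"
      using homogeneous_contraction_funpow[OF B]
      by (simp add: c_def parts_funpow_walk_dsum homogeneous_contraction_def)
    then have "2 * l2norm (Qop ((B ^^ t) (odd_part \<psi>))) \<le> c + l2norm (Qop ?\<phi>)"
      using l2norm_Qop_odd_part_le[OF funpow_walk_dsum_domQ[OF A B assms(3)], of t]
      by (simp add: parts_funpow_walk_dsum)
    from divide_right_mono[OF this, of "real t"] show ?thesis
      by (simp add: add_divide_distrib)
  qed
  then have "Limsup sequentially (\<lambda>t. ereal 2 * ereal (l2norm (Qop ((B ^^ t) (odd_part \<psi>))) / real t))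
      \<le> limsup (\<lambda>t. ereal (c / real t) + ereal (l2norm (Qop ((walk_dsum A B ^^ t) \<psi>)) / real t))"
    by (intro Limsup_mono always_eventually) simp
  also have "\<dots> = vel_state (walk_dsum A B) \<psi>"
  proof -
    have lim: "(\<lambda>t. ereal (c / real t)) \<longlonglongrightarrow> ereal 0"
      by (intro tendsto_ereal lim_const_over_n)
    show ?thesis
      unfolding vel_state_def by (subst ereal_limsup_lim_add[OF lim]) simp_all
  qed
  moreover have "Limsup sequentially (\<lambda>t. ereal 2 * ereal (l2norm (Qop ((B ^^ t) (odd_part \<psi>))) / real t))
      = 2 * vel_state B (odd_part \<psi>)"
    unfolding vel_state_def by (subst Limsup_ereal_mult_left) simp_all
  ultimately show ?thesis
    by simp
qed

lemma vel_state_walk_dsum_le: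
  assumes A: "homogeneous_contraction A" and B: "homogeneous_contraction B"
    and "\<psi> \<in> domQ" and "l2norm \<psi> = 1" and "vel A \<le> ereal m" and "vel B \<le> ereal m"
  shows "vel_state (walk_dsum A B) \<psi> \<le> ereal (2 * m)"
proof -
  define x y where "x = even_part \<psi>" and "y = odd_part \<psi>"
  have x: "x \<in> domQ" and y: "y \<in> domQ"
    using assms(3) domQ_iff_parts[of \<psi>] by (simp_all add: x_def y_def)
  have "0 \<le> m"
    using order.trans[OF vel_nonneg assms(5)] by simp
  have "(l2norm x)\<^sup>2 + (l2norm y)\<^sup>2 = 1"
    using l2norm_parts[of \<psi>] assms(3,4) by (simp add: domQ_def x_def y_def)
  then have "(l2norm x * m)\<^sup>2 + (l2norm y * m)\<^sup>2 = m\<^sup>2"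
    by (simp add: power_mult_distrib flip: distrib_right)
  then have norms: "sqrt ((l2norm x * m)\<^sup>2 + (l2norm y * m)\<^sup>2) = m"
    using \<open>0 \<le> m\<close> by simp
  define a where "a t = l2norm (Qop ((A ^^ t) x)) / real t" for t
  define b where "b t = l2norm (Qop ((B ^^ t) y)) / real t" for t
  have bound: "Limsup sequentially (\<lambda>t. ereal (l2norm (Qop ((W ^^ t) z)) / real t)) \<le> ereal (l2norm z * m)"
    if "homogeneous_contraction W" "z \<in> domQ" "vel W \<le> ereal m" for W z
  proof -
    have "Limsup sequentially (\<lambda>t. ereal (l2norm (Qop ((W ^^ t) z)) / real t)) \<le> ereal (l2norm z) * vel W"
      using vel_state_le_l2norm_times_vel[OF that(1,2)] by (simp add: vel_state_def)
    also have "\<dots> \<le> ereal (l2norm z) * ereal m"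
      by (rule ereal_mult_left_mono[OF that(3)]) (simp add: l2norm_nonneg)
    finally show ?thesis
      by simp
  qed
  have "ereal (l2norm (Qop ((walk_dsum A B ^^ t) \<psi>)) / real t)
      \<le> ereal (l2norm y / real t) + ereal 2 * ereal (sqrt ((a t)\<^sup>2 + (b t)\<^sup>2))" for t
  proof -
    let ?\<phi> = "(walk_dsum A B ^^ t) \<psi>"
    have "l2norm (odd_part ?\<phi>) \<le> l2norm y"
      using homogeneous_contraction_funpow[OF B] y
      by (simp add: y_def parts_funpow_walk_dsum homogeneous_contraction_def)
    then have "l2norm (Qop ?\<phi>) \<le> l2norm y
        + 2 * sqrt ((l2norm (Qop ((A ^^ t) x)))\<^sup>2 + (l2norm (Qop ((B ^^ t) y)))\<^sup>2)"
      using l2norm_Qop_le_parts[OF funpow_walk_dsum_domQ[OF A B assms(3)], of t]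
      by (simp add: parts_funpow_walk_dsum x_def y_def)
    from divide_right_mono[OF this, of "real t"] show ?thesis
      by (simp add: a_def b_def sqrt_sum_squares_divide add_divide_distrib)
  qed
  then have "vel_state (walk_dsum A B) \<psi>
      \<le> limsup (\<lambda>t. ereal (l2norm y / real t) + ereal 2 * ereal (sqrt ((a t)\<^sup>2 + (b t)\<^sup>2)))"
    unfolding vel_state_def by (intro Limsup_mono always_eventually) simp
  also have "\<dots> = ereal 2 * limsup (\<lambda>t. ereal (sqrt ((a t)\<^sup>2 + (b t)\<^sup>2)))"
  proof -
    have lim: "(\<lambda>t. ereal (l2norm y / real t)) \<longlonglongrightarrow> ereal 0"
      by (intro tendsto_ereal lim_const_over_n)
    show ?thesis
      using Limsup_ereal_mult_left[of sequentially 2 "\<lambda>t. ereal (sqrt ((a t)\<^sup>2 + (b t)\<^sup>2))"]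
      by (subst ereal_limsup_lim_add[OF lim]) simp_all
  qed
  also have "\<dots> \<le> ereal 2 * ereal (sqrt ((l2norm x * m)\<^sup>2 + (l2norm y * m)\<^sup>2))"
    using bound[OF A x assms(5)] bound[OF B y assms(6)]
    by (intro ereal_mult_left_mono Limsup_sqrt_sum_squares_le)
      (simp_all add: a_def b_def l2norm_nonneg)
  finally show ?thesis
    by (simp add: norms)
qed

lemma vel_walk_dsum_le:
  assumes A: "homogeneous_contraction A" and B: "homogeneous_contraction B"
  shows "vel (walk_dsum A B) \<le> 2 * max (vel A) (vel B)"
proof (cases "max (vel A) (vel B)")
  case (real m)
  then have "vel A \<le> ereal m" and "vel B \<le> ereal m"
    by (metis max.cobounded1 max.cobounded2)+
  note bound = vel_state_walk_dsum_le[OF A B _ _ this]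
  have "vel (walk_dsum A B) \<le> ereal (2 * m)"
    unfolding vel_def by (rule SUP_least) (simp add: bound)
  then show ?thesis
    using real by simp
next
  case MInf
  then show ?thesis
    using vel_nonneg[of A] max.cobounded1[of "vel A" "vel B"] by simp
qed simp

lemma interleave_zero_domQ:
  assumes "x \<in> domQ" and "l2norm x = 1"
  shows "interleave x (\<lambda>_ _. 0) \<in> domQ" and "l2norm (interleave x (\<lambda>_ _. 0)) = 1"
    and "interleave (\<lambda>_ _. 0) x \<in> domQ" and "l2norm (interleave (\<lambda>_ _. 0) x) = 1"
proof -
  have "in_l2 x"
    using assms(1) by (simp add: domQ_def)
  then show "interleave x (\<lambda>_ _. 0) \<in> domQ" and "l2norm (interleave x (\<lambda>_ _. 0)) = 1"
    and "interleave (\<lambda>_ _. 0) x \<in> domQ" and "l2norm (interleave (\<lambda>_ _. 0) x) = 1"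
    using assms by (simp_all add: interleave_domQ zero_domQ l2norm_interleave in_l2_zero l2norm_zero)
qed

lemma vel_walk_dsum_ge:
  assumes A: "homogeneous_contraction A" and B: "homogeneous_contraction B"
  shows "2 * max (vel A) (vel B) \<le> vel (walk_dsum A B)"
proof -
  have "2 * vel A \<le> vel (walk_dsum A B)"
  proof (rule two_times_vel_le)
    fix x
    assume x: "x \<in> domQ" "l2norm x = 1"
    have "2 * vel_state A x \<le> vel_state (walk_dsum A B) (interleave x (\<lambda>_ _. 0))"
      using vel_state_walk_dsum_ge_even[OF A B interleave_zero_domQ(1)[OF x]] by simp
    also have "\<dots> \<le> vel (walk_dsum A B)"
      by (rule vel_state_le_vel[OF interleave_zero_domQ(1,2)[OF x]])
    finally show "2 * vel_state A x \<le> vel (walk_dsum A B)" .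
  qed
  moreover have "2 * vel B \<le> vel (walk_dsum A B)"
  proof (rule two_times_vel_le)
    fix y
    assume y: "y \<in> domQ" "l2norm y = 1"
    have "2 * vel_state B y \<le> vel_state (walk_dsum A B) (interleave (\<lambda>_ _. 0) y)"
      using vel_state_walk_dsum_ge_odd[OF A B interleave_zero_domQ(3)[OF y]] by simp
    also have "\<dots> \<le> vel (walk_dsum A B)"
      by (rule vel_state_le_vel[OF interleave_zero_domQ(3,4)[OF y]])
    finally show "2 * vel_state B y \<le> vel (walk_dsum A B)" .
  qed
  ultimately show ?thesis
    by (simp add: max_def)
qed

theorem lemma3p5:
  assumes "is_walk w1" and "is_walk w2"
  shows "vel (walk_dsum (walk_op w1) (walk_op w2)) = 2 * max (vel (walk_op w1)) (vel (walk_op w2))"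
proof -
  have A: "homogeneous_contraction (walk_op w1)" and B: "homogeneous_contraction (walk_op w2)"
    using assms by (simp_all add: homogeneous_contraction_walk_op)
  show ?thesis
    using vel_walk_dsum_le[OF A B] vel_walk_dsum_ge[OF A B] by (rule antisym)
qed

end
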